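(* Let $d=3$ and $r\in\mathbb{R}^8\setminus\{0\}$ be such that $\cos(3\phi(r))\neq0$, where $\phi(r)\in[-\pi/6,\pi/6]$ is defined by $\sin(3\phi(r))=-\frac{3\sqrt3}{2\|r\|^3}\det(r\cdot\Lambda)$. Then the eigenvalues of $r\cdot\Lambda$ are $\frac{2}{\sqrt3}\|r\|\sin(\phi(r)+2\pi k/3)$, $k=0,1,2$, so that $K_3(r)=\sum_{k=0}^2\exp\{-i\sqrt2\|r\|\sin(\phi(r)+2\pi k/3)\}$, and $$\nabla_rK_3(r)=-3i\sqrt{\tfrac23}\Bigl(F_1(r)\,p(r)+F_2(r)\,\frac{r}{\|r\|}\Bigr),$$ where $p(r)\in\mathbb{R}^8$, $p^{(m)}(r)=\sum_{i,j=1}^8\frac{r_ir_jd_{ijm}}{\|r\|^2}$, and $$F_1(r)=\sum_{k=0}^2\frac{\exp\{-i\sqrt2\|r\|\sin(\phi(r)+2\pi k/3)\}}{1-2\cos(2(\phi(r)+2\pi k/3))},\qquad F_2(r)=\frac{2}{\sqrt3}\sum_{k=0}^2\sin(\phi(r)+2\pi k/3)\frac{\exp\{-i\sqrt2\|r\|\sin(\phi(r)+2\pi k/3)\}}{1-2\cos(2(\phi(r)+2\pi k/3))}.$$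
   Context: $\Lambda=(\Lambda_1,\dots,\Lambda_8)$ are the standard Gell-Mann matrices (traceless Hermitian $3\times3$, $\mathrm{tr}(\Lambda_k\Lambda_m)=2\delta_{km}$, $\Lambda_k\Lambda_m=\frac23\delta_{km}\mathbb{I}+\sum_j(d_{kmj}+if_{kmj})\Lambda_j$); the nonzero symmetric structure constants are, up to permutation of indices, $d_{146}=d_{157}=d_{256}=d_{344}=d_{355}=\tfrac12$, $d_{247}=d_{366}=d_{377}=-\tfrac12$, $d_{118}=d_{228}=d_{338}=\tfrac1{\sqrt3}$, $d_{888}=-\tfrac1{\sqrt3}$, $d_{448}=d_{558}=d_{668}=d_{778}=-\tfrac1{2\sqrt3}$. $r\cdot\Lambda=\sum_jr_j\Lambda_j$, $\|r\|$ is the Euclidean norm on $\mathbb{R}^8$, and $K_3(r):=\mathrm{tr}\exp\{-i\sqrt{3/2}\,(r\cdot\Lambda)\}$. *)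

theory Defs
  imports "HOL-Analysis.Analysis" "HOL-Library.Numeral_Type"
begin

(* Indices of type 3 are 1, 2, 3 (note 3 = 0 in the ring 3, but 1,2,3 are the three distinct
   elements).  Indices of type 8 are identified with 1..8 via idx8. *)

definition idx8 :: "8 \<Rightarrow> nat" where
  "idx8 j = nat (Rep_bit0 j) + 1"

definition mk3 :: "complex list list \<Rightarrow> complex^3^3" where
  "mk3 xss = (\<chi> a b. xss ! (nat (Rep_bit1 a)) ! (nat (Rep_bit1 b)))"

definition gellmann :: "nat \<Rightarrow> complex^3^3" where
  "gellmann k =
    (if k = 1 then mk3 [[0,1,0],[1,0,0],[0,0,0]]
     else if k = 2 then mk3 [[0,-\<i>,0],[\<i>,0,0],[0,0,0]]
     else if k = 3 then mk3 [[1,0,0],[0,-1,0],[0,0,0]]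
     else if k = 4 then mk3 [[0,0,1],[0,0,0],[1,0,0]]
     else if k = 5 then mk3 [[0,0,-\<i>],[0,0,0],[\<i>,0,0]]
     else if k = 6 then mk3 [[0,0,0],[0,0,1],[0,1,0]]
     else if k = 7 then mk3 [[0,0,0],[0,0,-\<i>],[0,\<i>,0]]
     else if k = 8 then mk3 [[1/sqrt 3,0,0],[0,1/sqrt 3,0],[0,0,-2/sqrt 3]]
     else 0)"

definition rLam :: "real^8 \<Rightarrow> complex^3^3" where
  "rLam r = (\<Sum>j\<in>UNIV. r $ j *\<^sub>R gellmann (idx8 j))"

(* symmetric structure constants d_{ijm}, given up to permutation of indices *)
definition dsym :: "nat \<Rightarrow> nat \<Rightarrow> nat \<Rightarrow> real" where
  "dsym i j m = (let s = sort [i, j, m] in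
     if s \<in> {[1,4,6],[1,5,7],[2,5,6],[3,4,4],[3,5,5]} then 1/2
     else if s \<in> {[2,4,7],[3,6,6],[3,7,7]} then -1/2
     else if s \<in> {[1,1,8],[2,2,8],[3,3,8]} then 1 / sqrt 3
     else if s = [8,8,8] then -1 / sqrt 3
     else if s \<in> {[4,4,8],[5,5,8],[6,6,8],[7,7,8]} then -1 / (2 * sqrt 3)
     else 0)"

fun matpow :: "complex^3^3 \<Rightarrow> nat \<Rightarrow> complex^3^3" where
  "matpow A 0 = mat 1"
| "matpow A (Suc n) = A ** matpow A n"

definition mexp :: "complex^3^3 \<Rightarrow> complex^3^3" where
  "mexp A = (\<Sum>n. (1 / fact n) *\<^sub>R matpow A n)"

definition K3 :: "real^8 \<Rightarrow> complex" where
  "K3 r = trace (mexp (mat (- \<i> * complex_of_real (sqrt (3/2))) ** rLam r))"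

definition phi :: "real^8 \<Rightarrow> real" where
  "phi r = (THE \<phi>. \<phi> \<in> {-pi/6 .. pi/6} \<and>
      complex_of_real (sin (3 * \<phi>)) =
        - complex_of_real (3 * sqrt 3 / (2 * norm r ^ 3)) * det (rLam r))"

definition pvec :: "real^8 \<Rightarrow> real^8" where
  "pvec r = (\<chi> m. \<Sum>i\<in>UNIV. \<Sum>j\<in>UNIV.
      r $ i * r $ j * dsym (idx8 i) (idx8 j) (idx8 m) / norm r ^ 2)"

definition theta :: "real^8 \<Rightarrow> nat \<Rightarrow> real" where
  "theta r k = phi r + 2 * pi * real k / 3"

definition F1 :: "real^8 \<Rightarrow> complex" where
  "F1 r = (\<Sum>k\<le>2. exp (- \<i> * complex_of_real (sqrt 2 * norm r * sin (theta r k)))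
                   / complex_of_real (1 - 2 * cos (2 * theta r k)))"

definition F2 :: "real^8 \<Rightarrow> complex" where
  "F2 r = complex_of_real (2 / sqrt 3) * (\<Sum>k\<le>2. complex_of_real (sin (theta r k)) *
             exp (- \<i> * complex_of_real (sqrt 2 * norm r * sin (theta r k)))
                   / complex_of_real (1 - 2 * cos (2 * theta r k)))"

end

(* The matrix r.Lambda is Hermitian with trace 0, sum of principal 2x2 minors -|r|^2 and
   determinant D(r) = 2/3 sum d_ijk r_i r_j r_k, so its characteristic polynomial is the depressed
   cubic x^3 - |r|^2 x - D(r).  Its roots are real, which forces 27 D^2 <= 4 |r|^6; hence phi(r) is
   arcsin(-3 sqrt 3 D / (2 |r|^3)) / 3, and Viete's trigonometric solution of the cubic shows that
   the eigenvalues are lambda_k = 2/sqrt 3 |r| sin(phi + 2 pi k/3).  By Cayley-Hamilton the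
   traces of the powers of a 3x3 matrix are the power sums of its eigenvalues, so
   K3 = sum_k exp(-i sqrt(3/2) lambda_k).

   When cos 3phi <> 0 the argument of arcsin stays inside (-1, 1) near r, so each lambda_k is
   differentiable there.  Differentiating lambda_k^3 - |r|^2 lambda_k - D(r) = 0 implicitly, with
   grad D = 2 |r|^2 p(r) and 3 lambda_k^2 - |r|^2 = |r|^2 (1 - 2 cos 2theta_k) <> 0, gives
   grad lambda_k = 2 (p + 2/sqrt 3 sin theta_k r/|r|) / (1 - 2 cos 2theta_k), and the chain rule
   yields the gradient of K3. *)

theory Submission
  imports Defs
begin

section \<open>Characteristic polynomial, powers and exponential of 3 by 3 matrices\<close>

definition principal_minors_sum :: "'a::comm_ring_1^3^3 \<Rightarrow> 'a" where
  "principal_minors_sum M = M$1$1 * M$2$2 - M$1$2 * M$2$1 + M$1$1 * M$3$3 - M$1$3 * M$3$1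
     + M$2$2 * M$3$3 - M$2$3 * M$3$2"

lemma mat_nth: "mat x $ i $ j = (if i = j then x else 0)"
  by (simp add: mat_def)

lemma mat_mult_nth: "(mat c ** A) $ i $ j = c * A $ i $ j"
  by (simp add: matrix_matrix_mult_def mat_def if_distrib if_distribR cong: if_cong)

lemma det_mat_minus_3:
  fixes M :: "'a::comm_ring_1^3^3"
  shows "det (mat x - M) = x^3 - trace M * x^2 + principal_minors_sum M * x - det M"
  by (simp add: det_3 mat_nth trace_def sum_3 principal_minors_sum_def algebra_simps
      power2_eq_square power3_eq_cube)

lemma trace_square_3:
  fixes M :: "'a::comm_ring_1^3^3"
  shows "trace (M ** M) = trace M ^ 2 - 2 * principal_minors_sum M"
  by (simp add: matrix_matrix_mult_def trace_def sum_3 principal_minors_sum_def algebra_simps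
      power2_eq_square)

lemma cayley_hamilton_3:
  fixes M :: "'a::comm_ring_1^3^3"
  shows "M ** (M ** M)
    = mat (trace M) ** (M ** M) - mat (principal_minors_sum M) ** M + mat (det M)"
  by (simp add: vec_eq_iff forall_3 matrix_matrix_mult_def sum_3 mat_nth trace_def
      principal_minors_sum_def det_3 algebra_simps)

lemma matrix_add_rdistrib: "(A + B) ** (C::'a::semiring_1^'p^'n) = A ** C + B ** C"
  by (simp add: vec_eq_iff matrix_matrix_mult_def algebra_simps sum.distrib)

lemma matrix_diff_rdistrib: "(A - B) ** (C::'a::ring_1^'p^'n) = A ** C - B ** C"
  by (simp add: vec_eq_iff matrix_matrix_mult_def algebra_simps sum_subtractf)

lemma trace_mat_mult: "trace (mat c ** M) = c * trace M"
  by (simp add: trace_def mat_mult_nth sum_distrib_left)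

lemma mat_mult_mat_mult:
  fixes A :: "'a::comm_semiring_1^'n^'m"
  shows "(mat c ** A) ** (mat d ** B) = mat (c * d) ** (A ** B)"
  unfolding vec_eq_iff mat_mult_nth matrix_matrix_mult_def[of "mat c ** A"]
  by (simp add: mat_mult_nth matrix_matrix_mult_def sum_distrib_left mult_ac)

lemma matpow_mat_mult: "matpow (mat c ** A) n = mat (c ^ n) ** matpow A n"
  by (induction n) (simp_all add: mat_mult_mat_mult)

lemma quadratic_identically_zero:
  fixes a b c :: "'a::field_char_0"
  assumes "\<And>x. a * x^2 + b * x + c = 0"
  shows "a = 0 \<and> b = 0 \<and> c = 0"
proof -
  have "c = 0" "a + b + c = 0" "a - b + c = 0"
    using assms[of 0] assms[of 1] assms[of "-1"] by simp_all
  then show ?thesis by (simp add: add_eq_0_iff)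
qed

lemma vieta_3:
  fixes t c d l0 l1 l2 :: "'a::field_char_0"
  assumes "\<And>x. x^3 - t * x^2 + c * x - d = (x - l0) * (x - l1) * (x - l2)"
  shows "t = l0 + l1 + l2" "c = l0 * l1 + l0 * l2 + l1 * l2" "d = l0 * l1 * l2"
proof -
  have "((l0 + l1 + l2) - t) * x^2 + (c - (l0 * l1 + l0 * l2 + l1 * l2)) * x
      + (l0 * l1 * l2 - d) = 0" for x
    using assms[of x] by (simp add: algebra_simps power2_eq_square power3_eq_cube)
  from quadratic_identically_zero[OF this]
  show "t = l0 + l1 + l2" "c = l0 * l1 + l0 * l2 + l1 * l2" "d = l0 * l1 * l2"
    by simp_all
qed

lemma linear_recurrence_3_eq:
  assumes "\<And>n. f (n + 3) = a * f (n + 2) + b * f (n + 1) + c * f n"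
    and "\<And>n. g (n + 3) = a * g (n + 2) + b * g (n + 1) + c * g n"
    and "f 0 = g 0" "f 1 = g 1" "f 2 = g 2"
  shows "f (n::nat) = g n"
proof -
  have "f n = g n \<and> f (n + 1) = g (n + 1) \<and> f (n + 2) = g (n + 2)"
  proof (induction n)
    case (Suc n)
    then have "f (n + 3) = g (n + 3)" using assms(1,2)[of n] by simp
    with Suc show ?case by (simp add: numeral_3_eq_3 numeral_2_eq_2)
  qed (use assms(3-5) in \<open>simp add: numeral_2_eq_2\<close>)
  then show ?thesis by simp
qed

lemma trace_matpow_3:
  fixes M :: "complex^3^3"
  assumes charpoly: "\<And>x. det (mat x - M) = (x - l0) * (x - l1) * (x - l2)"
  shows "trace (matpow M n) = l0^n + l1^n + l2^n"
proof -
  let ?t = "trace M" and ?c = "principal_minors_sum M" and ?d = "det M"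
  have coeffs: "\<And>x. x^3 - ?t * x^2 + ?c * x - ?d = (x - l0) * (x - l1) * (x - l2)"
    using charpoly by (simp add: det_mat_minus_3)
  note vieta = vieta_3[OF coeffs]
  have root_rec: "l^(n + 3) = ?t * l^(n + 2) + (- ?c) * l^(n + 1) + ?d * l^n"
    if "l \<in> {l0, l1, l2}" for l n
  proof -
    have "l^3 - ?t * l^2 + ?c * l - ?d = 0" using coeffs[of l] that by auto
    then have "l^n * (l^3 - ?t * l^2 + ?c * l - ?d) = 0" by simp
    then show ?thesis by (simp add: algebra_simps power_add power2_eq_square power3_eq_cube)
  qed
  have matpow_rec: "matpow M (n + 3) = M ** (M ** M) ** matpow M n" for n
    by (simp add: numeral_3_eq_3 matrix_mul_assoc)
  show ?thesis
  proof (rule linear_recurrence_3_eq[where a = ?t and b = "- ?c" and c = ?d])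
    show "trace (matpow M (n + 3)) = ?t * trace (matpow M (n + 2)) + - ?c * trace (matpow M (n + 1))
        + ?d * trace (matpow M n)" for n
      unfolding matpow_rec cayley_hamilton_3
      by (simp add: matrix_add_rdistrib matrix_diff_rdistrib matrix_mul_assoc[symmetric]
          trace_add trace_sub trace_mat_mult numeral_2_eq_2)
  next
    show "l0^(n + 3) + l1^(n + 3) + l2^(n + 3) = ?t * (l0^(n + 2) + l1^(n + 2) + l2^(n + 2))
        + - ?c * (l0^(n + 1) + l1^(n + 1) + l2^(n + 1)) + ?d * (l0^n + l1^n + l2^n)" for n
      by (simp only: root_rec insert_iff simp_thms) (simp add: algebra_simps)
  next
    show "trace (matpow M 1) = l0^1 + l1^1 + l2^1" using vieta by simp
    show "trace (matpow M 2) = l0^2 + l1^2 + l2^2"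
      using vieta by (simp add: numeral_2_eq_2 trace_square_3[simplified numeral_2_eq_2]
          algebra_simps power2_eq_square)
  qed (simp add: trace_I)
qed

lemma norm_vec_le_sum: "norm (x::'a::real_normed_vector^'n) \<le> (\<Sum>i\<in>UNIV. norm (x $ i))"
  by (simp add: norm_vec_def L2_set_le_sum)

lemma norm_matrix_entry_le: "norm ((A::'a::real_normed_vector^'n^'m) $ i $ j) \<le> norm A"
  using Finite_Cartesian_Product.norm_nth_le[of "A $ i" j] Finite_Cartesian_Product.norm_nth_le[of A i]
  by linarith

lemma norm_matrix_mult_le:
  fixes A :: "'a::real_normed_field^'n^'m" and B :: "'a^'p^'n"
  shows "norm (A ** B) \<le> real (CARD('m) * CARD('p) * CARD('n)) * norm A * norm B"
proof -
  have entry: "norm ((A ** B) $ i $ j) \<le> real CARD('n) * (norm A * norm B)" for i j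
  proof -
    have "norm ((A ** B) $ i $ j) \<le> (\<Sum>k\<in>UNIV. norm (A $ i $ k) * norm (B $ k $ j))"
      unfolding matrix_matrix_mult_def by (simp add: norm_sum[THEN order_trans] norm_mult)
    also have "\<dots> \<le> (\<Sum>k\<in>(UNIV::'n set). norm A * norm B)"
      by (intro sum_mono mult_mono norm_matrix_entry_le norm_ge_zero)
    finally show ?thesis by simp
  qed
  have "norm (A ** B) \<le> (\<Sum>i\<in>UNIV. \<Sum>j\<in>UNIV. norm ((A ** B) $ i $ j))"
    by (rule order_trans[OF norm_vec_le_sum sum_mono[OF norm_vec_le_sum]])
  also have "\<dots> \<le> (\<Sum>i\<in>(UNIV::'m set). \<Sum>j\<in>(UNIV::'p set). real CARD('n) * (norm A * norm B))"
    by (intro sum_mono entry)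
  finally show ?thesis by (simp add: mult_ac)
qed

lemma norm_matpow_le: "norm (matpow B n) \<le> norm (mat 1 :: complex^3^3) * (27 * norm B) ^ n"
proof (induction n)
  case (Suc n)
  have "norm (matpow B (Suc n)) \<le> 27 * norm B * norm (matpow B n)"
    using norm_matrix_mult_le[of B "matpow B n"] by simp
  also have "\<dots> \<le> 27 * norm B * (norm (mat 1 :: complex^3^3) * (27 * norm B) ^ n)"
    by (intro mult_left_mono Suc) simp
  finally show ?case by (simp add: mult_ac)
qed simp

lemma summable_mexp: "summable (\<lambda>n. (1 / fact n) *\<^sub>R matpow B n)"
proof (rule summable_comparison_test')
  show "summable (\<lambda>n. norm (mat 1 :: complex^3^3) * ((27 * norm B) ^ n / fact n))"
    using summable_exp[of "27 * norm B"]
    by (intro summable_mult) (simp add: divide_inverse mult.commute)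
  show "norm ((1 / fact n) *\<^sub>R matpow B n)
      \<le> norm (mat 1 :: complex^3^3) * ((27 * norm B) ^ n / fact n)" for n
    using norm_matpow_le[of B n] by (simp add: divide_right_mono)
qed

lemma bounded_linear_trace: "bounded_linear (trace :: 'a::real_normed_algebra_1^'n^'n \<Rightarrow> 'a)"
  unfolding trace_def[abs_def]
  by (intro bounded_linear_sum
      bounded_linear_compose[OF bounded_linear_vec_nth bounded_linear_vec_nth])

lemma trace_scaleR: "trace (a *\<^sub>R M) = a *\<^sub>R trace (M::'a::real_algebra_1^'n^'n)"
  by (simp add: trace_def scaleR_sum_right)

lemma trace_mexp_3:
  fixes A :: "complex^3^3"
  assumes "\<And>x. det (mat x - A) = (x - l0) * (x - l1) * (x - l2)"
  shows "trace (mexp (mat c ** A)) = exp (c * l0) + exp (c * l1) + exp (c * l2)"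
proof -
  have "(\<lambda>n. trace ((1 / fact n) *\<^sub>R matpow (mat c ** A) n)) sums trace (mexp (mat c ** A))"
    unfolding mexp_def
    by (intro bounded_linear.sums[OF bounded_linear_trace] summable_sums summable_mexp)
  moreover have "trace ((1 / fact n) *\<^sub>R matpow (mat c ** A) n)
      = (c * l0)^n /\<^sub>R fact n + (c * l1)^n /\<^sub>R fact n + (c * l2)^n /\<^sub>R fact n" for n
    by (simp add: trace_scaleR matpow_mat_mult trace_mat_mult trace_matpow_3[OF assms]
        algebra_simps divide_inverse)
  moreover have "(\<lambda>n. (c * l0)^n /\<^sub>R fact n + (c * l1)^n /\<^sub>R fact n + (c * l2)^n /\<^sub>R fact n)
      sums (exp (c * l0) + exp (c * l1) + exp (c * l2))"
    by (intro sums_add exp_converges)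
  ultimately show ?thesis by (simp add: sums_unique2)
qed

section \<open>Hermitian matrices and depressed cubics\<close>

lemma mat_mult_vector: "mat \<mu> *v (v::'a::semiring_1^'n) = \<mu> *s v"
  by (simp add: vec_eq_iff matrix_vector_mult_def mat_def if_distrib if_distribR cong: if_cong)

lemma eigenvalue_iff_det:
  fixes M :: "'a::field^'n^'n"
  shows "(\<exists>v. v \<noteq> 0 \<and> M *v v = \<mu> *s v) \<longleftrightarrow> det (mat \<mu> - M) = 0"
proof -
  have "M *v v = \<mu> *s v \<longleftrightarrow> (mat \<mu> - M) *v v = 0" for v
    by (simp add: matrix_vector_mult_diff_rdistrib mat_mult_vector eq_commute[of "\<mu> *s v"])
  moreover have "det (mat \<mu> - M) \<noteq> 0 \<longleftrightarrow> (\<forall>v. (mat \<mu> - M) *v v = 0 \<longrightarrow> v = 0)"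
    by (simp add: invertible_det_nz[symmetric] invertible_left_inverse matrix_left_invertible_ker)
  ultimately show ?thesis by blast
qed

lemma hermitian_eigenvalue_real:
  fixes M :: "complex^'n^'n"
  assumes hermitian: "\<And>i j. M $ j $ i = cnj (M $ i $ j)"
    and "v \<noteq> 0" and eigen: "M *v v = \<mu> *s v"
  shows "\<mu> \<in> \<real>"
proof -
  define q where "q = (\<Sum>i\<in>UNIV. cnj (v $ i) * (M *v v) $ i)"
  define S where "S = (\<Sum>i\<in>UNIV. (norm (v $ i))\<^sup>2)"
  have "q = \<mu> * of_real S"
    unfolding q_def S_def eigen of_real_sum sum_distrib_left
    by (intro sum.cong) (simp_all add: complex_norm_square mult_ac del: of_real_power)
  moreover have "cnj q = q"
  proof -
    have "cnj q = (\<Sum>i\<in>UNIV. \<Sum>j\<in>UNIV. v $ i * M $ j $ i * cnj (v $ j))"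
      by (simp add: q_def matrix_vector_mult_def hermitian[symmetric] sum_distrib_left mult_ac)
    also have "\<dots> = q"
      by (subst sum.swap) (simp add: q_def matrix_vector_mult_def sum_distrib_left mult_ac)
    finally show ?thesis .
  qed
  moreover have "S > 0"
  proof -
    obtain i where "v $ i \<noteq> 0" using \<open>v \<noteq> 0\<close> by (auto simp: vec_eq_iff)
    then have "0 < (norm (v $ i))\<^sup>2" by simp
    also have "\<dots> \<le> S" unfolding S_def by (rule member_le_sum) auto
    finally show ?thesis .
  qed
  ultimately have "cnj \<mu> = \<mu>" by simp
  then show ?thesis by (simp add: Reals_cnj_iff)
qed

lemma depressed_cubic_has_real_root:
  fixes a D :: real
  assumes "0 \<le> a"
  shows "\<exists>t. t^3 - a * t - D = 0"
proof -
  define b where "b = 1 + a + \<bar>D\<bar>"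
  have "b * (b * b - a) \<ge> \<bar>D\<bar>"
  proof -
    have "b * b - a \<ge> 1" using assms by (simp add: b_def algebra_simps power2_eq_square)
    then have "b * (b * b - a) \<ge> b * 1" using assms by (intro mult_left_mono) (simp_all add: b_def)
    then show ?thesis using assms b_def by linarith
  qed
  then have "(-b)^3 - a * (-b) - D \<le> 0" "0 \<le> b^3 - a * b - D"
    by (simp_all add: power3_eq_cube algebra_simps abs_le_iff)
  moreover have "-b \<le> b" using assms by (simp add: b_def)
  moreover have "continuous_on {-b..b} (\<lambda>t. t^3 - a * t - D)" by (intro continuous_intros)
  ultimately show ?thesis using IVT'[of "\<lambda>t. t^3 - a * t - D" "-b" 0 b] by blast
qed

lemma depressed_cubic_discriminant_nonneg:
  fixes a D :: real
  assumes "0 \<le> a"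
    and real_roots: "\<And>z::complex. z^3 - of_real a * z - of_real D = 0 \<Longrightarrow> z \<in> \<real>"
  shows "27 * D\<^sup>2 \<le> 4 * a^3"
proof -
  obtain t where t: "t^3 - a * t - D = 0" using depressed_cubic_has_real_root[OF assms(1)] by blast
  have "3 * t\<^sup>2 \<le> 4 * a"
  proof (rule ccontr)
    assume "\<not> 3 * t\<^sup>2 \<le> 4 * a"
    define w where "w = sqrt (3 * t\<^sup>2 - 4 * a)"
    have "w > 0" and w2: "w * w = 3 * t\<^sup>2 - 4 * a"
      using \<open>\<not> 3 * t\<^sup>2 \<le> 4 * a\<close> by (simp_all add: w_def)
    \<comment> \<open>the other two roots are \<open>(- t \<plusminus> \<i> w) / 2\<close>\<close>
    define z where "z = Complex (- t / 2) (w / 2)"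
    have "z^3 - of_real a * z - of_real D
        = (z - of_real t) * (z * z + of_real t * z + of_real (t\<^sup>2 - a))"
      using arg_cong[OF t, of complex_of_real]
      by (simp add: algebra_simps power2_eq_square power3_eq_cube)
    moreover have "z * z + of_real t * z + of_real (t\<^sup>2 - a) = 0"
      using w2 by (simp add: z_def complex_eq_iff power2_eq_square field_simps)
    ultimately have "z^3 - of_real a * z - of_real D = 0" by simp
    then have "z \<in> \<real>" by (rule real_roots)
    then show False using \<open>w > 0\<close> by (simp add: z_def complex_is_Real_iff)
  qed
  then have "0 \<le> (4 * a - 3 * t\<^sup>2) * (3 * t\<^sup>2 - a)\<^sup>2" by simp
  moreover have "D = t^3 - a * t" using t by simp
  then have "4 * a^3 - 27 * D\<^sup>2 = (4 * a - 3 * t\<^sup>2) * (3 * t\<^sup>2 - a)\<^sup>2"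
    by (simp only:) (simp add: power2_eq_square power3_eq_cube algebra_simps)
  ultimately show ?thesis by linarith
qed

section \<open>Trigonometric solution of the depressed cubic\<close>

lemma sin_treble: "sin (3 * x) = 3 * sin x - 4 * sin x ^ 3" for x :: real
proof -
  have "sin (3 * x) = sin (2 * x + x)" by simp
  also have "\<dots> = 3 * sin x - 4 * sin x ^ 3"
    unfolding sin_add sin_double cos_double using sin_cos_squared_add[of x] by algebra
  finally show ?thesis .
qed

lemma trig_roots_depressed_cubic:
  fixes N \<phi> :: real and x :: complex
  shows "(\<Prod>k\<le>2. x - of_real (2 / sqrt 3 * N * sin (\<phi> + 2 * pi * real k / 3)))
       = x^3 - of_real (N\<^sup>2) * x + of_real (2 * N^3 / (3 * sqrt 3) * sin (3 * \<phi>))"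
proof -
  define l where "l k = 2 / sqrt 3 * N * sin (\<phi> + 2 * pi * real k / 3)" for k
  define A where "A = 2 / sqrt 3 * N"
  define s where "s = sin \<phi>"
  define c where "c = cos \<phi>"
  have sc: "s\<^sup>2 + c\<^sup>2 = 1" by (simp add: s_def c_def)
  have l0: "l 0 = A * s" by (simp add: l_def A_def s_def)
  have l1: "l 1 = A * (sqrt 3 * c - s) / 2"
    unfolding l_def A_def s_def c_def of_nat_1 mult_1_right sin_add cos_120 sin_120
    by (simp add: field_simps)
  have l2: "l 2 = - A * (sqrt 3 * c + s) / 2"
  proof -
    have "\<phi> + 2 * pi * real 2 / 3 = (\<phi> + pi / 3) + pi" by simp
    then have "l 2 = - A * sin (\<phi> + pi / 3)" by (simp only: l_def A_def sin_periodic_pi) simp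
    then show ?thesis unfolding sin_add sin_60 cos_60 s_def c_def by (simp add: field_simps)
  qed
  have e1: "l 0 + l 1 + l 2 = 0"
    unfolding l0 l1 l2 by (simp add: field_simps)
  have e2: "l 0 * l 1 + l 0 * l 2 + l 1 * l 2 = - N\<^sup>2"
  proof -
    have "l 0 * l 1 + l 0 * l 2 + l 1 * l 2 = - 3 / 4 * A\<^sup>2 * (s\<^sup>2 + c\<^sup>2)"
      unfolding l0 l1 l2 by (simp add: field_simps power2_eq_square)
    then show ?thesis unfolding sc by (simp add: A_def power_mult_distrib power_divide)
  qed
  have e3: "l 0 * l 1 * l 2 = - (2 * N^3 / (3 * sqrt 3) * sin (3 * \<phi>))"
  proof -
    have cc: "3 * c\<^sup>2 - s\<^sup>2 = 3 - 4 * s\<^sup>2" using sc by linarith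
    have sqrt_3_cube: "sqrt 3 ^ 3 = 3 * sqrt (3::real)" by (simp add: power3_eq_cube)
    have "l 0 * l 1 * l 2 = - (A^3) / 4 * s * (3 * c\<^sup>2 - s\<^sup>2)"
      unfolding l0 l1 l2 by (simp add: field_simps power2_eq_square power3_eq_cube)
    also have "\<dots> = - (A^3) / 4 * (3 * s - 4 * s^3)"
      unfolding cc by (simp add: field_simps power2_eq_square power3_eq_cube)
    also have "\<dots> = - (2 * N^3 / (3 * sqrt 3) * sin (3 * \<phi>))"
      by (simp add: sin_treble A_def s_def power_mult_distrib power_divide sqrt_3_cube)
    finally show ?thesis .
  qed
  have "(\<Prod>k\<le>2. x - of_real (l k)) = x^3 - of_real (l 0 + l 1 + l 2) * x\<^sup>2
      + of_real (l 0 * l 1 + l 0 * l 2 + l 1 * l 2) * x - of_real (l 0 * l 1 * l 2)"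
    by (simp add: atMost_nat_numeral algebra_simps power2_eq_square power3_eq_cube)
  then show ?thesis unfolding e1 e2 e3 by (simp add: l_def)
qed

lemma one_minus_2_cos_double_ne_0:
  fixes x :: real
  assumes "cos (3 * x) \<noteq> 0"
  shows "1 - 2 * cos (2 * x) \<noteq> 0"
proof
  assume "1 - 2 * cos (2 * x) = 0"
  then have s2: "4 * (sin x)\<^sup>2 = 1" by (simp add: cos_double_sin)
  then have "sin (3 * x) = 2 * sin x" by (simp add: sin_treble power2_eq_square power3_eq_cube)
  then have "(sin (3 * x))\<^sup>2 = 1" using s2 by (simp add: power_mult_distrib)
  then show False using assms sin_cos_squared_add[of "3 * x"] by simp
qed

section \<open>The matrix \<open>r\<cdot>\<Lambda>\<close>\<close>

lemma sqrt_3_mult_self: "sqrt 3 * sqrt 3 = (3::real)" "sqrt 3 * (sqrt 3 * x) = 3 * (x::real)"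
  by (simp_all add: mult.assoc[symmetric])

lemma UNIV_8: "(UNIV :: 8 set) = {0, 1, 2, 3, 4, 5, 6, 7}"
  using card_subset_eq[of UNIV "{0, 1, 2, 3, 4, 5, 6, 7 :: 8}"] by simp

lemma sum_UNIV_8:
  "sum f (UNIV :: 8 set) = f 0 + (f 1 + (f 2 + (f 3 + (f 4 + (f 5 + (f 6 + f 7))))))"
  unfolding UNIV_8 by (subst sum.insert; simp)+

lemma idx8_numeral: "idx8 0 = 1" "idx8 1 = 2" "idx8 2 = 3" "idx8 3 = 4"
  "idx8 4 = 5" "idx8 5 = 6" "idx8 6 = 7" "idx8 7 = 8"
  by (simp_all add: idx8_def bit0.Rep_numeral bit0.Rep_0 bit0.Rep_1)

lemma mk3_nth:
  "mk3 xss $ 1 $ 1 = xss!1!1" "mk3 xss $ 1 $ 2 = xss!1!2" "mk3 xss $ 1 $ 3 = xss!1!0"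
  "mk3 xss $ 2 $ 1 = xss!2!1" "mk3 xss $ 2 $ 2 = xss!2!2" "mk3 xss $ 2 $ 3 = xss!2!0"
  "mk3 xss $ 3 $ 1 = xss!0!1" "mk3 xss $ 3 $ 2 = xss!0!2" "mk3 xss $ 3 $ 3 = xss!0!0"
  by (simp_all add: mk3_def bit1.Rep_numeral bit1.Rep_1)

lemma rLam_nth: "rLam r $ a $ b = (\<Sum>j\<in>UNIV. complex_of_real (r $ j) * gellmann (idx8 j) $ a $ b)"
  unfolding rLam_def sum_component vector_scaleR_component by (simp add: scaleR_conv_of_real)

lemma gellmann_numeral:
  "gellmann 1 = mk3 [[0,1,0],[1,0,0],[0,0,0]]"
  "gellmann 2 = mk3 [[0,-\<i>,0],[\<i>,0,0],[0,0,0]]"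
  "gellmann 3 = mk3 [[1,0,0],[0,-1,0],[0,0,0]]"
  "gellmann 4 = mk3 [[0,0,1],[0,0,0],[1,0,0]]"
  "gellmann 5 = mk3 [[0,0,-\<i>],[0,0,0],[\<i>,0,0]]"
  "gellmann 6 = mk3 [[0,0,0],[0,0,1],[0,1,0]]"
  "gellmann 7 = mk3 [[0,0,0],[0,0,-\<i>],[0,\<i>,0]]"
  "gellmann 8 = mk3 [[1/sqrt 3,0,0],[0,1/sqrt 3,0],[0,0,-2/sqrt 3]]"
  by (simp_all add: gellmann_def)

lemma rLam_entries:
  "rLam r $ 1 $ 1 = of_real (r$7 / sqrt 3 - r$2)"
  "rLam r $ 1 $ 2 = of_real (r$5) - \<i> * of_real (r$6)"
  "rLam r $ 1 $ 3 = of_real (r$0) + \<i> * of_real (r$1)"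
  "rLam r $ 2 $ 1 = of_real (r$5) + \<i> * of_real (r$6)"
  "rLam r $ 2 $ 2 = of_real (- 2 * r$7 / sqrt 3)"
  "rLam r $ 2 $ 3 = of_real (r$3) + \<i> * of_real (r$4)"
  "rLam r $ 3 $ 1 = of_real (r$0) - \<i> * of_real (r$1)"
  "rLam r $ 3 $ 2 = of_real (r$3) - \<i> * of_real (r$4)"
  "rLam r $ 3 $ 3 = of_real (r$2 + r$7 / sqrt 3)"
  unfolding rLam_nth sum_UNIV_8 idx8_numeral gellmann_numeral mk3_nth
  by (simp_all add: of_real_def algebra_simps)

definition dsym_quad :: "real^8 \<Rightarrow> 8 \<Rightarrow> real" where
  "dsym_quad r m = (\<Sum>i\<in>UNIV. \<Sum>j\<in>UNIV. r $ i * r $ j * dsym (idx8 i) (idx8 j) (idx8 m))"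

definition rLam_det :: "real^8 \<Rightarrow> real" where
  "rLam_det r = 2 / 3 * (\<Sum>m\<in>UNIV. r $ m * dsym_quad r m)"

lemma pvec_nth: "pvec r $ m = dsym_quad r m / (norm r)\<^sup>2"
  by (simp add: pvec_def dsym_quad_def sum_divide_distrib)

lemma dsym_quad_numeral:
  "dsym_quad r 0 = r$3*r$5 + r$4*r$6 + 2*r$0*r$7/sqrt 3"
  "dsym_quad r 1 = r$4*r$5 - r$3*r$6 + 2*r$1*r$7/sqrt 3"
  "dsym_quad r 2 = 2*r$2*r$7/sqrt 3 + (r$3^2 + r$4^2 - r$5^2 - r$6^2)/2"
  "dsym_quad r 3 = r$0*r$5 - r$1*r$6 + r$2*r$3 - r$3*r$7/sqrt 3"
  "dsym_quad r 4 = r$0*r$6 + r$1*r$5 + r$2*r$4 - r$4*r$7/sqrt 3"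
  "dsym_quad r 5 = r$0*r$3 + r$1*r$4 - r$2*r$5 - r$5*r$7/sqrt 3"
  "dsym_quad r 6 = r$0*r$4 - r$1*r$3 - r$2*r$6 - r$6*r$7/sqrt 3"
  "dsym_quad r 7 = (r$0^2 + r$1^2 + r$2^2 - r$7^2)/sqrt 3
                    - (r$3^2 + r$4^2 + r$5^2 + r$6^2)/(2 * sqrt 3)"
  unfolding dsym_quad_def sum_UNIV_8 idx8_numeral
  by (simp_all add: dsym_def field_simps power2_eq_square sqrt_3_mult_self)

lemma norm_squared_8:
  "(norm (r::real^8))\<^sup>2 = r$0^2 + r$1^2 + r$2^2 + r$3^2 + r$4^2 + r$5^2 + r$6^2 + r$7^2"
  by (simp add: norm_vec_def L2_set_def sum_nonneg sum_UNIV_8 add.assoc)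

lemma trace_rLam: "trace (rLam r) = 0"
  by (simp add: trace_def sum_3 rLam_entries)

lemma principal_minors_sum_rLam: "principal_minors_sum (rLam r) = - of_real ((norm r)\<^sup>2)"
  unfolding norm_squared_8 principal_minors_sum_def rLam_entries
  by (simp add: complex_eq_iff algebra_simps power2_eq_square sqrt_3_mult_self)

lemma det_rLam: "det (rLam r) = of_real (rLam_det r)"
  unfolding det_3 rLam_entries rLam_det_def sum_UNIV_8 dsym_quad_numeral
  by (simp add: complex_eq_iff field_simps power2_eq_square sqrt_3_mult_self)

lemma charpoly_rLam_coeffs:
  "det (mat x - rLam r) = x^3 - of_real ((norm r)\<^sup>2) * x - of_real (rLam_det r)"
  by (simp add: det_mat_minus_3 trace_rLam principal_minors_sum_rLam det_rLam)

lemma rLam_hermitian: "rLam r $ j $ i = cnj (rLam r $ i $ j)"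
  using exhaust_3[of i] exhaust_3[of j] by (auto simp: rLam_entries)

section \<open>Eigenvalues of \<open>r\<cdot>\<Lambda>\<close> and the trace \<open>K\<^sub>3\<close>\<close>

definition sin3phi :: "real^8 \<Rightarrow> real" where
  "sin3phi r = - (3 * sqrt 3 / (2 * norm r ^ 3)) * rLam_det r"

definition eigval :: "real^8 \<Rightarrow> nat \<Rightarrow> real" where
  "eigval r k = 2 / sqrt 3 * norm r * sin (theta r k)"

lemma charpoly_rLam_root_real: "det (mat z - rLam r) = 0 \<Longrightarrow> z \<in> \<real>"
  using eigenvalue_iff_det hermitian_eigenvalue_real[OF rLam_hermitian] by blast

lemma rLam_det_bound: "27 * (rLam_det r)\<^sup>2 \<le> 4 * ((norm r)\<^sup>2)^3"
proof (rule depressed_cubic_discriminant_nonneg)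
  fix z :: complex
  assume "z^3 - of_real ((norm r)\<^sup>2) * z - of_real (rLam_det r) = 0"
  then show "z \<in> \<real>" by (intro charpoly_rLam_root_real) (simp add: charpoly_rLam_coeffs)
qed simp

lemma abs_sin3phi_le_1:
  assumes "r \<noteq> 0"
  shows "\<bar>sin3phi r\<bar> \<le> 1"
proof -
  have "(sin3phi r)\<^sup>2 = 27 * (rLam_det r)\<^sup>2 / (4 * ((norm r)\<^sup>2)^3)"
    using assms by (simp add: sin3phi_def power_mult_distrib power_divide field_simps
        power2_eq_square power3_eq_cube sqrt_3_mult_self)
  also have "\<dots> \<le> 1" using rLam_det_bound[of r] assms by simp
  finally show ?thesis by (simp add: abs_square_le_1)
qed

lemma phi_eq_arcsin:
  assumes "r \<noteq> 0"
  shows "phi r = arcsin (sin3phi r) / 3"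
proof -
  have "- complex_of_real (3 * sqrt 3 / (2 * norm r ^ 3)) * det (rLam r) = of_real (sin3phi r)"
    by (simp add: det_rLam sin3phi_def)
  then have "phi r = (THE \<phi>. \<phi> \<in> {-pi/6 .. pi/6} \<and> sin (3 * \<phi>) = sin3phi r)"
    by (simp add: phi_def)
  also have "\<dots> = arcsin (sin3phi r) / 3"
  proof (rule the_equality)
    have "-1 \<le> sin3phi r" "sin3phi r \<le> 1" using abs_sin3phi_le_1[OF assms] by auto
    then show "arcsin (sin3phi r) / 3 \<in> {-pi/6 .. pi/6}
        \<and> sin (3 * (arcsin (sin3phi r) / 3)) = sin3phi r"
      using arcsin_bounded[of "sin3phi r"] by simp
  next
    fix \<phi> assume "\<phi> \<in> {-pi/6 .. pi/6} \<and> sin (3 * \<phi>) = sin3phi r"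
    then show "\<phi> = arcsin (sin3phi r) / 3" using arcsin_sin[of "3 * \<phi>"] by auto
  qed
  finally show ?thesis .
qed

lemma sin_3_phi: "r \<noteq> 0 \<Longrightarrow> sin (3 * phi r) = sin3phi r"
  using abs_sin3phi_le_1[of r] by (simp add: phi_eq_arcsin abs_le_iff)

lemma charpoly_rLam: "det (mat x - rLam r) = (\<Prod>k\<le>2. x - of_real (eigval r k))"
proof (cases "r = 0")
  case True
  \<comment> \<open>whatever \<open>phi 0\<close> is, the factor \<open>norm r\<close> makes every \<open>eigval 0 k\<close> vanish\<close>
  then show ?thesis by (simp add: charpoly_rLam_coeffs rLam_det_def eigval_def)
next
  case False
  have "(\<Prod>k\<le>2. x - of_real (eigval r k))
      = x^3 - of_real ((norm r)\<^sup>2) * x + of_real (2 * norm r ^ 3 / (3 * sqrt 3) * sin (3 * phi r))"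
    using trig_roots_depressed_cubic[of x "norm r" "phi r"] by (simp add: eigval_def theta_def)
  also have "2 * norm r ^ 3 / (3 * sqrt 3) * sin (3 * phi r) = - rLam_det r"
    unfolding sin_3_phi[OF False] sin3phi_def
    using False by (simp add: field_simps sqrt_3_mult_self)
  finally show ?thesis by (simp add: charpoly_rLam_coeffs)
qed

lemma rLam_eigenvalues: "{\<mu>. \<exists>v. v \<noteq> 0 \<and> rLam r *v v = \<mu> *s v} = {of_real (eigval r k) | k. k \<le> 2}"
  by (auto simp: eigenvalue_iff_det charpoly_rLam)

lemma K3_eq_sum_exp: "K3 r = (\<Sum>k\<le>2. exp (- \<i> * of_real (sqrt (3/2) * eigval r k)))"
proof -
  have "det (mat x - rLam r)
      = (x - of_real (eigval r 0)) * (x - of_real (eigval r 1)) * (x - of_real (eigval r 2))" for x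
    by (simp add: charpoly_rLam atMost_nat_numeral mult_ac)
  then show ?thesis
    unfolding K3_def by (simp add: trace_mexp_3 atMost_nat_numeral mult.assoc)
qed

section \<open>Differentiability of the eigenvalues and of \<open>K\<^sub>3\<close>\<close>

lemma has_derivative_vec_nth [derivative_intros]:
  "(g has_derivative g') F \<Longrightarrow> ((\<lambda>x. g x $ i) has_derivative (\<lambda>h. g' h $ i)) F"
  by (rule bounded_linear.has_derivative[OF bounded_linear_vec_nth])

lemma rLam_det_has_derivative:
  "(rLam_det has_derivative (\<lambda>h. 2 * (\<Sum>m\<in>UNIV. h $ m * dsym_quad r m))) (at r)"
  unfolding rLam_det_def[abs_def] sum_UNIV_8 dsym_quad_numeral
  by (auto intro!: derivative_eq_intros
      simp: fun_eq_iff field_simps power2_eq_square sqrt_3_mult_self)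

lemma real_differentiable_at: "(f has_real_derivative D) (at x) \<Longrightarrow> f differentiable (at x)"
  by (rule differentiableI[OF has_field_derivative_imp_has_derivative])

lemma sin3phi_differentiable: "r \<noteq> 0 \<Longrightarrow> sin3phi differentiable (at r)"
  unfolding sin3phi_def[abs_def]
  by (intro differentiable_mult differentiable_minus differentiable_divide differentiable_const
      differentiable_power differentiable_norm_at differentiableI[OF rLam_det_has_derivative]) auto

lemma eigval_differentiable:
  assumes "r \<noteq> 0" and "\<bar>sin3phi r\<bar> < 1"
  shows "(\<lambda>y. eigval y k) differentiable (at r)"
proof -
  \<comment> \<open>away from the origin \<open>eigval\<close> agrees with the arcsin formula for \<open>phi\<close>\<close>
  let ?g = "\<lambda>y. 2 / sqrt 3 * norm y * sin (arcsin (sin3phi y) / 3 + 2 * pi * real k / 3)"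
  have "arcsin differentiable (at (sin3phi r))"
    using assms(2) by (intro real_differentiable_at[OF DERIV_arcsin]) auto
  then have "(\<lambda>y. arcsin (sin3phi y)) differentiable (at r)"
    using sin3phi_differentiable[OF assms(1)] by (rule differentiable_compose)
  then have "(\<lambda>y. arcsin (sin3phi y) / 3 + 2 * pi * real k / 3) differentiable (at r)"
    by (intro differentiable_add differentiable_divide differentiable_const) auto
  then have "(\<lambda>y. sin (arcsin (sin3phi y) / 3 + 2 * pi * real k / 3)) differentiable (at r)"
    by (rule differentiable_compose[OF real_differentiable_at[OF DERIV_sin]])
  then have "?g differentiable (at r)"
    using assms(1) by (intro differentiable_mult differentiable_const differentiable_norm_at)
  then obtain L where "(?g has_derivative L) (at r)" unfolding differentiable_def by blast
  then have "((\<lambda>y. eigval y k) has_derivative L) (at r)"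
    by (rule has_derivative_transform_within_open[of _ _ _ _ "- {0}"])
       (use assms(1) in \<open>auto simp: eigval_def theta_def phi_eq_arcsin\<close>)
  then show ?thesis unfolding differentiable_def by blast
qed

lemma eigval_cubic: "eigval y k ^ 3 - (norm y)\<^sup>2 * eigval y k - rLam_det y = 0" if "k \<le> 2"
proof -
  have "det (mat (of_real (eigval y k)) - rLam y) = 0"
    unfolding charpoly_rLam by (rule prod_zero) (use that in auto)
  then have "complex_of_real (eigval y k ^ 3 - (norm y)\<^sup>2 * eigval y k - rLam_det y) = 0"
    unfolding charpoly_rLam_coeffs by simp
  then show ?thesis by (simp only: of_real_eq_0_iff)
qed

lemma eigval_derivative_implicit:
  assumes "r \<noteq> 0" and "k \<le> 2" and L: "((\<lambda>y. eigval y k) has_derivative L) (at r)"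
  shows "(3 * (eigval r k)\<^sup>2 - (norm r)\<^sup>2) * L h
    = 2 * (r \<bullet> h) * eigval r k + 2 * (\<Sum>m\<in>UNIV. h $ m * dsym_quad r m)"
proof -
  let ?G = "\<lambda>y. eigval y k ^ 3 - (norm y)\<^sup>2 * eigval y k - rLam_det y"
  let ?D = "\<lambda>h. (3 * (eigval r k)\<^sup>2 - (norm r)\<^sup>2) * L h
    - (2 * (r \<bullet> h) * eigval r k + 2 * (\<Sum>m\<in>UNIV. h $ m * dsym_quad r m))"
  have "(?G has_derivative ?D) (at r)"
    by (rule has_derivative_eq_rhs, (rule derivative_intros L has_derivative_norm[OF assms(1)]
        rLam_det_has_derivative)+)
       (use assms(1) in \<open>simp add: fun_eq_iff sgn_div_norm inner_commute field_simps
          power2_eq_square\<close>)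
  moreover have "?G = (\<lambda>y. 0)" using eigval_cubic[OF assms(2)] by (simp add: fun_eq_iff)
  then have "(?G has_derivative (\<lambda>h. 0)) (at r)" by simp
  ultimately have "?D = (\<lambda>h. 0)" by (rule has_derivative_unique)
  then show ?thesis by (simp add: fun_eq_iff)
qed

lemma cos_3_theta: "cos (3 * theta r k) = cos (3 * phi r)"
proof -
  have "3 * theta r k = 3 * phi r + 2 * pi * real k" by (simp add: theta_def algebra_simps)
  then show ?thesis by (simp add: cos_add cos_integer_2pi sin_integer_2pi)
qed

lemma sqrt_3_2_mult_eigval: "sqrt (3/2) * eigval r k = sqrt 2 * norm r * sin (theta r k)"
proof -
  have "sqrt (3/2) * eigval r k = (sqrt (3/2) * (2 / sqrt 3)) * norm r * sin (theta r k)"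
    by (simp add: eigval_def mult_ac)
  also have "sqrt (3/2) * (2 / sqrt 3) = sqrt (2::real)"
    by (simp add: real_sqrt_divide field_simps real_sqrt_mult[symmetric])
  finally show ?thesis .
qed

lemma abs_sin3phi_less_1:
  assumes "r \<noteq> 0" and "cos (3 * phi r) \<noteq> 0"
  shows "\<bar>sin3phi r\<bar> < 1"
proof -
  have "(sin3phi r)\<^sup>2 = 1 - (cos (3 * phi r))\<^sup>2"
    using sin_3_phi[OF assms(1)] sin_cos_squared_add[of "3 * phi r"] by simp
  also have "\<dots> < 1" using assms(2) by simp
  finally show ?thesis by (simp add: abs_square_less_1)
qed

lemma eigval_has_derivative:
  assumes "r \<noteq> 0" and "cos (3 * phi r) \<noteq> 0" and "k \<le> 2"
  shows "((\<lambda>y. eigval y k) has_derivative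
      (\<lambda>h. 2 * (pvec r \<bullet> h + 2 / sqrt 3 * sin (theta r k) * (r \<bullet> h) / norm r)
        / (1 - 2 * cos (2 * theta r k)))) (at r)"
proof -
  obtain L where L: "((\<lambda>y. eigval y k) has_derivative L) (at r)"
    using eigval_differentiable[OF assms(1) abs_sin3phi_less_1[OF assms(1,2)]]
    unfolding differentiable_def by blast
  define d where "d = 1 - 2 * cos (2 * theta r k)"
  have "d \<noteq> 0"
    unfolding d_def using assms(2) by (intro one_minus_2_cos_double_ne_0) (simp add: cos_3_theta)
  have Lh: "L h = 2 * (pvec r \<bullet> h + 2 / sqrt 3 * sin (theta r k) * (r \<bullet> h) / norm r) / d" for h
  proof -
    have "3 * (eigval r k)\<^sup>2 - (norm r)\<^sup>2 = (norm r)\<^sup>2 * d"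
      unfolding eigval_def d_def cos_double_sin
      by (simp add: power_mult_distrib power_divide algebra_simps)
    moreover have "(\<Sum>m\<in>UNIV. h $ m * dsym_quad r m) = (norm r)\<^sup>2 * (pvec r \<bullet> h)"
      using assms(1) by (simp add: pvec_nth inner_vec_def sum_distrib_left field_simps)
    ultimately have "(norm r)\<^sup>2 * d * L h
        = 2 * (r \<bullet> h) * eigval r k + 2 * ((norm r)\<^sup>2 * (pvec r \<bullet> h))"
      using eigval_derivative_implicit[OF assms(1,3) L, of h] by simp
    then have "norm r * (norm r * d * L h)
        = norm r * (2 * (r \<bullet> h) * (2 / sqrt 3 * sin (theta r k)) + 2 * norm r * (pvec r \<bullet> h))"
      by (simp add: eigval_def power2_eq_square algebra_simps)
    then have "norm r * d * L h
        = 2 * (r \<bullet> h) * (2 / sqrt 3 * sin (theta r k)) + 2 * norm r * (pvec r \<bullet> h)"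
      using assms(1) by simp
    then show ?thesis
      using assms(1) \<open>d \<noteq> 0\<close> by (simp add: field_simps)
  qed
  have "L = (\<lambda>h. 2 * (pvec r \<bullet> h + 2 / sqrt 3 * sin (theta r k) * (r \<bullet> h) / norm r) / d)"
    by (rule ext, rule Lh)
  with L show ?thesis by (simp only: d_def)
qed

lemma sqrt_3_2_eq: "sqrt (3/2) = 3/2 * sqrt (2/(3::real))"
proof -
  have "sqrt (3/2) = sqrt (3/2) * (sqrt (3/2) * sqrt (2/(3::real)))"
    by (simp add: real_sqrt_mult[symmetric])
  also have "\<dots> = (sqrt (3/2) * sqrt (3/2)) * sqrt (2/3)" by (simp only: mult.assoc)
  finally show ?thesis by simp
qed

lemma exp_eigval_has_derivative:
  assumes "r \<noteq> 0" and "cos (3 * phi r) \<noteq> 0" and "k \<le> 2"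
  shows "((\<lambda>y. exp (- \<i> * of_real (sqrt (3/2) * eigval y k))) has_derivative
      (\<lambda>h. - 3 * \<i> * of_real (sqrt (2/3)) * (exp (- \<i> * of_real (sqrt 2 * norm r * sin (theta r k)))
        * of_real ((pvec r \<bullet> h + 2 / sqrt 3 * sin (theta r k) * ((r \<bullet> h) / norm r))
                   / (1 - 2 * cos (2 * theta r k)))))) (at r)"
proof -
  let ?E = "exp (- \<i> * of_real (sqrt 2 * norm r * sin (theta r k)))"
  let ?D = "\<lambda>h. 2 * (pvec r \<bullet> h + 2 / sqrt 3 * sin (theta r k) * (r \<bullet> h) / norm r)
    / (1 - 2 * cos (2 * theta r k))"
  let ?a = "\<lambda>h. (pvec r \<bullet> h + 2 / sqrt 3 * sin (theta r k) * ((r \<bullet> h) / norm r))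
    / (1 - 2 * cos (2 * theta r k))"
  have "((\<lambda>y. - \<i> * of_real (sqrt (3/2) * eigval y k)) has_derivative
      (\<lambda>h. - \<i> * of_real (sqrt (3/2) * ?D h))) (at r)"
    using eigval_has_derivative[OF assms]
    by (intro has_derivative_mult_right has_derivative_of_real)
  then have "((\<lambda>y. exp (- \<i> * of_real (sqrt (3/2) * eigval y k))) has_derivative
      (\<lambda>h. ?E * (- \<i> * of_real (sqrt (3/2) * ?D h)))) (at r)"
    unfolding sqrt_3_2_mult_eigval[symmetric]
    by (rule has_derivative_compose[OF _ has_field_derivative_imp_has_derivative[OF DERIV_exp]])
  moreover have "?E * (- \<i> * of_real (sqrt (3/2) * ?D h))
      = - 3 * \<i> * of_real (sqrt (2/3)) * (?E * of_real (?a h))" for h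
  proof -
    have D: "sqrt (3/2) * ?D h = 3 * sqrt (2/3) * ?a h"
      unfolding sqrt_3_2_eq by (simp add: add_divide_distrib algebra_simps)
    show ?thesis unfolding D by (simp add: mult_ac)
  qed
  ultimately show ?thesis by (simp only:)
qed

lemma K3_has_derivative:
  assumes "r \<noteq> 0" and "cos (3 * phi r) \<noteq> 0"
  shows "(K3 has_derivative (\<lambda>h. - 3 * \<i> * of_real (sqrt (2/3))
      * (F1 r * of_real (pvec r \<bullet> h) + F2 r * of_real ((r \<bullet> h) / norm r)))) (at r)"
proof -
  define E where "E k = exp (- \<i> * of_real (sqrt 2 * norm r * sin (theta r k)))" for k
  define a where "a h k = (pvec r \<bullet> h + 2 / sqrt 3 * sin (theta r k) * ((r \<bullet> h) / norm r))
    / (1 - 2 * cos (2 * theta r k))" for h k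
  have "((\<lambda>y. \<Sum>k\<le>2. exp (- \<i> * of_real (sqrt (3/2) * eigval y k))) has_derivative
      (\<lambda>h. \<Sum>k\<le>2. - 3 * \<i> * of_real (sqrt (2/3)) * (E k * of_real (a h k)))) (at r)"
    using exp_eigval_has_derivative[OF assms] by (intro has_derivative_sum) (auto simp: E_def a_def)
  moreover have "F1 r * of_real (pvec r \<bullet> h) + F2 r * of_real ((r \<bullet> h) / norm r)
      = (\<Sum>k\<le>2. E k * of_real (a h k))" for h
    by (simp add: F1_def F2_def E_def a_def sum_distrib_left sum_distrib_right sum.distrib
        divide_inverse algebra_simps)
  ultimately show ?thesis
    by (simp add: K3_eq_sum_exp[abs_def] sum_distrib_left)
qed

theorem mainTheorem4:
  fixes r :: "real^8"
  assumes "r \<noteq> 0"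
    and "cos (3 * phi r) \<noteq> 0"
  shows "{\<mu>. \<exists>v. v \<noteq> 0 \<and> rLam r *v v = \<mu> *s v}
           = {complex_of_real (2 / sqrt 3 * norm r * sin (theta r k)) | k. k \<le> 2}
       \<and> (\<forall>x. det (mat x - rLam r) =
              (\<Prod>k\<le>2. x - complex_of_real (2 / sqrt 3 * norm r * sin (theta r k))))
       \<and> K3 r = (\<Sum>k\<le>2. exp (- \<i> * complex_of_real (sqrt 2 * norm r * sin (theta r k))))
       \<and> (K3 has_derivative
            (\<lambda>h. \<Sum>m\<in>UNIV. complex_of_real (h $ m) *
               (- 3 * \<i> * complex_of_real (sqrt (2/3)) *
                  (F1 r * complex_of_real (pvec r $ m)
                   + F2 r * complex_of_real (r $ m / norm r))))) (at r)"
proof (intro conjI allI)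
  show "{\<mu>. \<exists>v. v \<noteq> 0 \<and> rLam r *v v = \<mu> *s v}
      = {complex_of_real (2 / sqrt 3 * norm r * sin (theta r k)) | k. k \<le> 2}"
    using rLam_eigenvalues by (simp add: eigval_def)
  show "det (mat x - rLam r) = (\<Prod>k\<le>2. x - complex_of_real (2 / sqrt 3 * norm r * sin (theta r k)))"
    for x
    using charpoly_rLam by (simp add: eigval_def)
  show "K3 r = (\<Sum>k\<le>2. exp (- \<i> * complex_of_real (sqrt 2 * norm r * sin (theta r k))))"
    by (simp add: K3_eq_sum_exp sqrt_3_2_mult_eigval)
  show "(K3 has_derivative (\<lambda>h. \<Sum>m\<in>UNIV. complex_of_real (h $ m) *
      (- 3 * \<i> * complex_of_real (sqrt (2/3)) *
        (F1 r * complex_of_real (pvec r $ m) + F2 r * complex_of_real (r $ m / norm r))))) (at r)"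
    by (rule has_derivative_eq_rhs[OF K3_has_derivative[OF assms]])
       (simp add: fun_eq_iff inner_vec_def sum_distrib_left sum_divide_distrib sum.distrib
        sum_subtractf sum_negf algebra_simps)
qed

end
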